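(* Let $m$ be a positive integer. Then \[ \sum_L\mathbf r_L=\bigl(1-\mathbf h_1+\mathbf h_m-\mathbf h_{m+1}+\mathbf h_{2m}-\cdots\bigr)^{-1}=\Bigl(\sum_{n\ge0}(\mathbf h_{mn}-\mathbf h_{mn+1})\Bigr)^{-1}, \] where the sum on the left is over all compositions $L$ (including the empty one) with all parts less than $m$.
   Context: In $F\langle\langle X_1,X_2,\dots\rangle\rangle$ ($F$ a field of characteristic $0$, noncommuting variables), $\mathbf h_n=\sum_{i_1\le\cdots\le i_n}X_{i_1}\cdots X_{i_n}$ ($\mathbf h_0=1$), and for a composition $L=(L_1,\dots,L_k)$ of $n$, $\mathbf r_L=\sum X_{i_1}\cdots X_{i_n}$ over $(i_1,\dots,i_n)$ weakly increasing within consecutive blocks of lengths $L_1,\dots,L_k$ and strictly decreasing between consecutive blocks ($i_{L_1+\cdots+L_j}>i_{L_1+\cdots+L_j+1}$); $\mathbf r_\emptyset=1$. *)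

theory Defs
  imports Main
begin

text \<open>Noncommutative formal power series over a coefficient ring 'a in the
variables X_0, X_1, X_2, ... (indexed by nat; only the order of indices matters).
A series is its coefficient function on words (monomials X_{i_1}...X_{i_n}
are identified with the lists [i_1,...,i_n]).\<close>

type_synonym 'a ncseries = "nat list \<Rightarrow> 'a"

definition nc_one :: "'a::comm_ring_1 ncseries" where
  "nc_one w = (if w = [] then 1 else 0)"

definition nc_mult :: "'a::comm_ring_1 ncseries \<Rightarrow> 'a ncseries \<Rightarrow> 'a ncseries" where
  "nc_mult f g w = (\<Sum>k\<le>length w. f (take k w) * g (drop k w))"

text \<open>Formal (coefficientwise) sum of a family of series indexed by I; this is
the meaning of an infinite sum of series when every coefficient receives
only finitely many nonzero contributions (which is the case below).\<close>
definition ncsum :: "('i \<Rightarrow> 'a::comm_ring_1 ncseries) \<Rightarrow> 'i set \<Rightarrow> 'a ncseries" where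
  "ncsum f I w = (\<Sum>i\<in>{i\<in>I. f i w \<noteq> 0}. f i w)"

definition hser :: "nat \<Rightarrow> 'a::comm_ring_1 ncseries" where
  "hser n w = (if length w = n \<and> sorted w then 1 else 0)"

definition is_composition :: "nat list \<Rightarrow> bool" where
  "is_composition L \<longleftrightarrow> (\<forall>x\<in>set L. 0 < x)"

text \<open>r_L: words of length |L| (= sum of parts), weakly increasing inside each block
and strictly decreasing across each block boundary. With 0-based positions j,
a block boundary lies between j and j+1 iff j+1 = L_1+...+L_k for some 1 \<le> k < length L.\<close>
definition rser :: "nat list \<Rightarrow> 'a::comm_ring_1 ncseries" where
  "rser L w = (if length w = sum_list L \<and>
      (\<forall>j. j + 1 < length w \<longrightarrow>
         (if (\<exists>k. 1 \<le> k \<and> k < length L \<and> j + 1 = sum_list (take k L))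
          then w ! j > w ! (j + 1) else w ! j \<le> w ! (j + 1)))
     then 1 else 0)"

end

theory Submission
  imports Defs
begin

(* Every word w has a unique decomposition into maximal weakly increasing
   runs; its list of run lengths is the unique composition L with r_L(w) = 1.
   Hence the coefficient of w in S (left-hand side) is 1 iff w has no weakly
   increasing factor of length m ("all runs are short"), and 0 otherwise.
   The coefficient of w in A (the alternating h-sum) is 0 unless w is sorted,
   and then depends only on |w|: it is [m | |w|] - [m | |w| - 1].
   In the Cauchy products S*A and A*S at a nonempty word w only the splits
   inside the last (resp. first) run of w contribute; all of them carry the
   same S-factor, and the remaining alternating sum telescopes to 0. *)


section \<open>Maximal weakly increasing runs\<close>

definition first_run :: "nat \<Rightarrow> nat list \<Rightarrow> bool" where
  "first_run a w \<longleftrightarrow> 0 < a \<and> a \<le> length w \<and> sorted (take a w)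
     \<and> (a < length w \<longrightarrow> w ! a < w ! (a - 1))"

fun runs :: "nat list \<Rightarrow> nat list \<Rightarrow> bool" where
  "runs [] w = (w = [])"
| "runs (a # L) w = (first_run a w \<and> runs L (drop a w))"

lemma runs_composition: "runs L w \<Longrightarrow> is_composition L"
proof (induction L arbitrary: w)
  case (Cons a L)
  then have "is_composition L" "0 < a" by (auto simp: first_run_def)
  then show ?case by (simp add: is_composition_def)
qed (simp add: is_composition_def)

text \<open>Every word has a run decomposition: prepending a letter either extends the
  first run or starts a new one.\<close>

lemma runs_exists: "\<exists>L. runs L w"
proof (induction w)
  case Nil
  show ?case by (rule exI[of _ "[]"]) simp
next
  case (Cons x w)
  show ?case
  proof (cases w)
    case Nil
    then have "runs [1] (x # w)" by (simp add: first_run_def)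
    then show ?thesis by blast
  next
    case (Cons y v)
    from Cons.IH obtain L where L: "runs L w" by blast
    with \<open>w = y # v\<close> obtain a L' where aL: "L = a # L'" by (cases L) auto
    with L have a: "first_run a w" "runs L' (drop a w)" by auto
    show ?thesis
    proof (cases "x \<le> y")
      case True
      have "sorted (x # take a w)"
        using a(1) True \<open>w = y # v\<close> by (cases a) (auto simp: first_run_def)
      then have "first_run (Suc a) (x # w)"
        using a(1) by (cases a) (auto simp: first_run_def)
      then have "runs (Suc a # L') (x # w)" using a(2) by simp
      then show ?thesis by blast
    next
      case False
      then have "runs (1 # L) (x # w)" using L \<open>w = y # v\<close> by (simp add: first_run_def)
      then show ?thesis by blast
    qed
  qed
qed

lemma first_run_exists: "w \<noteq> [] \<Longrightarrow> \<exists>a. first_run a w"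
proof -
  assume "w \<noteq> []"
  obtain L where "runs L w" using runs_exists by blast
  with \<open>w \<noteq> []\<close> show ?thesis by (cases L) auto
qed

lemma sorted_take_no_descent:
  assumes "sorted (take b w)" "0 < a" "a < b" "b \<le> length w"
  shows "w ! (a - 1) \<le> w ! a"
  using sorted_nth_mono[OF assms(1), of "a - 1" a] assms by simp

text \<open>The first run is determined by the word: a shorter candidate would end with
  a descent inside the sorted prefix of the longer one.\<close>

lemma first_run_unique: "first_run a w \<Longrightarrow> first_run b w \<Longrightarrow> a = b"
  unfolding first_run_def
  by (metis linorder_neqE_nat sorted_take_no_descent leD order_less_le_trans)

lemma runs_unique: "runs L w \<Longrightarrow> runs L' w \<Longrightarrow> L = L'"
proof (induction L arbitrary: L' w)
  case Nil
  then show ?case by (cases L') (auto simp: first_run_def)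
next
  case (Cons a L)
  then obtain b L'' where "L' = b # L''"
    by (cases L') (auto simp: first_run_def)
  with Cons.prems have "a = b" "runs L (drop a w)" "runs L'' (drop a w)"
    using first_run_unique by auto
  with Cons.IH \<open>L' = b # L''\<close> show ?case by simp
qed

section \<open>r_L is the indicator of the run decomposition\<close>

definition boundary :: "nat list \<Rightarrow> nat \<Rightarrow> bool" where
  "boundary L i \<longleftrightarrow> (\<exists>k. 1 \<le> k \<and> k < length L \<and> i = sum_list (take k L))"

definition descents_at_boundaries :: "nat list \<Rightarrow> nat list \<Rightarrow> bool" where
  "descents_at_boundaries L w \<longleftrightarrow> length w = sum_list L \<and>
     (\<forall>j. j + 1 < length w \<longrightarrow> (w ! (j + 1) < w ! j \<longleftrightarrow> boundary L (j + 1)))"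

lemma rser_descents: "rser L w = (if descents_at_boundaries L w then 1 else 0)"
proof -
  have "(if P then y < x else x \<le> y) \<longleftrightarrow> (y < x \<longleftrightarrow> P)" for P and x y :: nat by auto
  then show ?thesis
    unfolding rser_def descents_at_boundaries_def boundary_def by simp
qed

lemma boundary_Nil: "\<not> boundary [] i"
  by (simp add: boundary_def)

lemma boundary_Cons:
  assumes "is_composition L"
  shows "boundary (a # L) i \<longleftrightarrow> (i = a \<and> L \<noteq> []) \<or> (a < i \<and> boundary L (i - a))"
proof
  assume "boundary (a # L) i"
  then obtain k where k: "1 \<le> k" "k < Suc (length L)" "i = sum_list (take k (a # L))"
    unfolding boundary_def by auto
  show "(i = a \<and> L \<noteq> []) \<or> (a < i \<and> boundary L (i - a))"
  proof (cases "k = 1")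
    case True
    then show ?thesis using k by (cases L) auto
  next
    case False
    then obtain k' where k': "k = Suc (Suc k')" using k(1) by (cases k; cases "k - 1") auto
    then obtain b L' where L: "L = b # L'" using k by (cases L) auto
    have "0 < b" using assms L by (simp add: is_composition_def)
    moreover have "i = a + (b + sum_list (take k' L'))" using k(3) k' L by simp
    moreover have "boundary L (b + sum_list (take k' L'))"
      unfolding boundary_def using k(2) k' L by (intro exI[of _ "Suc k'"]) auto
    ultimately show ?thesis by simp
  qed
next
  assume "(i = a \<and> L \<noteq> []) \<or> (a < i \<and> boundary L (i - a))"
  then show "boundary (a # L) i"
  proof
    assume "i = a \<and> L \<noteq> []"
    then show ?thesis unfolding boundary_def by (intro exI[of _ 1]) auto
  next
    assume "a < i \<and> boundary L (i - a)"
    then obtain k where "1 \<le> k" "k < length L" "i = a + sum_list (take k L)"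
      unfolding boundary_def by auto
    then show ?thesis unfolding boundary_def by (intro exI[of _ "Suc k"]) auto
  qed
qed

lemma all_index_split:
  fixes a n :: nat
  assumes "0 < a" "a \<le> n"
  shows "(\<forall>j. j + 1 < n \<longrightarrow> P j) \<longleftrightarrow>
    (\<forall>j. j + 1 < a \<longrightarrow> P j) \<and> (a < n \<longrightarrow> P (a - 1)) \<and> (\<forall>j. j + 1 < n - a \<longrightarrow> P (a + j))"
proof (intro iffI conjI allI impI)
  assume H: "(\<forall>j. j + 1 < a \<longrightarrow> P j) \<and> (a < n \<longrightarrow> P (a - 1)) \<and> (\<forall>j. j + 1 < n - a \<longrightarrow> P (a + j))"
  fix j assume j: "j + 1 < n"
  consider "j + 1 < a" | "j + 1 = a" | "a \<le> j" by fastforce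
  then show "P j"
  proof cases
    case 3
    then have "j - a + 1 < n - a" using j by simp
    then have "P (a + (j - a))" using H by blast
    then show ?thesis using 3 by simp
  qed (use H j in auto)
qed (use assms in auto)

lemma descents_at_boundaries_Cons:
  assumes "0 < a" "is_composition L"
  shows "descents_at_boundaries (a # L) w \<longleftrightarrow>
    first_run a w \<and> descents_at_boundaries L (drop a w)"
proof (cases "length w = a + sum_list L")
  case len: True
  let ?D = "\<lambda>j. w ! (j + 1) < w ! j \<longleftrightarrow> boundary (a # L) (j + 1)"
  have inside: "(\<forall>j. j + 1 < a \<longrightarrow> ?D j) \<longleftrightarrow> sorted (take a w)"
    using len boundary_Cons[OF assms(2), of a] by (auto simp: sorted_iff_nth_Suc not_less)
  have junction: "(a < length w \<longrightarrow> ?D (a - 1)) \<longleftrightarrow> (a < length w \<longrightarrow> w ! a < w ! (a - 1))"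
    using len assms(1) boundary_Cons[OF assms(2), of a a] by auto
  have rest: "(\<forall>j. j + 1 < length w - a \<longrightarrow> ?D (a + j)) \<longleftrightarrow>
      descents_at_boundaries L (drop a w)"
    using len boundary_Cons[OF assms(2), of a]
    by (auto simp: descents_at_boundaries_def add.assoc)
  have "descents_at_boundaries (a # L) w \<longleftrightarrow> (\<forall>j. j + 1 < length w \<longrightarrow> ?D j)"
    using len unfolding descents_at_boundaries_def by auto
  also have "\<dots> \<longleftrightarrow> (\<forall>j. j + 1 < a \<longrightarrow> ?D j) \<and> (a < length w \<longrightarrow> ?D (a - 1))
      \<and> (\<forall>j. j + 1 < length w - a \<longrightarrow> ?D (a + j))"
    by (rule all_index_split) (use assms len in auto)
  also have "\<dots> \<longleftrightarrow> first_run a w \<and> descents_at_boundaries L (drop a w)"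
    unfolding inside junction rest first_run_def using assms(1) len by auto
  finally show ?thesis .
next
  case False
  then show ?thesis
    by (auto simp: descents_at_boundaries_def first_run_def)
qed

lemma rser_runs: "is_composition L \<Longrightarrow> rser L w = (if runs L w then 1 else 0)"
proof -
  assume "is_composition L"
  then have "descents_at_boundaries L w \<longleftrightarrow> runs L w"
  proof (induction L arbitrary: w)
    case Nil
    then show ?case by (auto simp: descents_at_boundaries_def boundary_Nil)
  next
    case (Cons a L)
    then have "0 < a" "is_composition L" by (auto simp: is_composition_def)
    then show ?case using Cons.IH descents_at_boundaries_Cons by simp
  qed
  then show ?thesis by (simp add: rser_descents)
qed

section \<open>Words with short runs: the coefficients of S\<close>

definition short_runs :: "nat \<Rightarrow> nat list \<Rightarrow> bool" where
  "short_runs m w \<longleftrightarrow> (\<forall>i. i + m \<le> length w \<longrightarrow> \<not> sorted (take m (drop i w)))"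

lemma short_runs_sorted:
  assumes "0 < m" "sorted u"
  shows "short_runs m u \<longleftrightarrow> length u < m"
proof
  assume "short_runs m u"
  then have "\<not> sorted (take m u)" if "m \<le> length u"
    using that unfolding short_runs_def by (metis add_0 drop0)
  then show "length u < m" using assms(2) sorted_wrt_take by (metis not_le)
qed (auto simp: short_runs_def)

lemma sorted_window_straddle:
  assumes s: "sorted (take m (drop i (p @ u)))"
    and i: "i < length p" "length p < i + m" "i + m \<le> length (p @ u)"
  shows "last p \<le> hd u"
proof -
  let ?W = "take m (drop i (p @ u))"
  have ne: "p \<noteq> []" "u \<noteq> []" using i by auto
  have lt: "length p - 1 - i < length p - i" using i by simp
  have "?W ! (length p - 1 - i) \<le> ?W ! (length p - i)"
    by (rule sorted_nth_mono[OF s]) (use i in auto)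
  moreover have "?W ! (length p - 1 - i) = last p"
    using i ne lt by (simp add: nth_append last_conv_nth)
  moreover have "?W ! (length p - i) = hd u"
    using i ne by (simp add: nth_append hd_conv_nth)
  ultimately show ?thesis by simp
qed

text \<open>Gluing two words at a strict descent creates no new weakly increasing
  factors: the runs of p @ u are those of p and those of u.\<close>

lemma short_runs_append_descent:
  assumes desc: "p \<noteq> [] \<Longrightarrow> u \<noteq> [] \<Longrightarrow> hd u < last p"
  shows "short_runs m (p @ u) \<longleftrightarrow> short_runs m p \<and> short_runs m u"
proof
  assume H: "short_runs m (p @ u)"
  have "short_runs m p"
    unfolding short_runs_def
  proof (intro allI impI)
    fix i assume "i + m \<le> length p"
    then show "\<not> sorted (take m (drop i p))"
      using H[unfolded short_runs_def, rule_format, of i] by simp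
  qed
  moreover have "short_runs m u"
    unfolding short_runs_def
  proof (intro allI impI)
    fix i assume "i + m \<le> length u"
    then show "\<not> sorted (take m (drop i u))"
      using H[unfolded short_runs_def, rule_format, of "length p + i"] by simp
  qed
  ultimately show "short_runs m p \<and> short_runs m u" ..
next
  assume H: "short_runs m p \<and> short_runs m u"
  show "short_runs m (p @ u)"
    unfolding short_runs_def
  proof (intro allI impI notI)
    fix i assume i: "i + m \<le> length (p @ u)" and s: "sorted (take m (drop i (p @ u)))"
    consider "i + m \<le> length p" | "length p \<le> i" | "i < length p" "length p < i + m"
      by linarith
    then show False
    proof cases
      case 1
      then show False using H s unfolding short_runs_def by simp
    next
      case 2
      then have "i - length p + m \<le> length u" "drop i (p @ u) = drop (i - length p) u"
        using i by auto
      then show False using H s unfolding short_runs_def by metis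
    next
      case 3
      then have "last p \<le> hd u" using sorted_window_straddle[OF s _ _ i] by simp
      moreover have "p \<noteq> []" "u \<noteq> []" using 3 i by auto
      ultimately show False using desc by simp
    qed
  qed
qed

lemma last_take_conv_nth:
  assumes "0 < a" "a \<le> length w"
  shows "last (take a w) = w ! (a - 1)"
proof -
  have "take a w \<noteq> []" "length (take a w) = a" using assms by auto
  then show ?thesis using assms(1) by (simp add: last_conv_nth)
qed

lemma first_run_junction:
  assumes "first_run a w" "drop a w \<noteq> []"
  shows "hd (drop a w) < last (take a w)"
proof -
  have "0 < a" "a < length w" "w ! a < w ! (a - 1)"
    using assms by (auto simp: first_run_def)
  moreover have "last (take a w) = w ! (a - 1)"
    using calculation by (simp add: last_take_conv_nth)
  ultimately show ?thesis by (simp add: hd_drop_conv_nth)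
qed

lemma runs_short_runs:
  assumes "0 < m" "runs L w"
  shows "(\<forall>x\<in>set L. x < m) \<longleftrightarrow> short_runs m w"
  using assms(2)
proof (induction L arbitrary: w)
  case Nil
  then show ?case using assms(1) by (simp add: short_runs_def)
next
  case (Cons a L)
  then have a: "first_run a w" and rest: "runs L (drop a w)" by auto
  have "short_runs m w \<longleftrightarrow> short_runs m (take a w) \<and> short_runs m (drop a w)"
    using short_runs_append_descent[of "take a w" "drop a w" m] first_run_junction[OF a] by simp
  also have "\<dots> \<longleftrightarrow> a < m \<and> (\<forall>x\<in>set L. x < m)"
    using short_runs_sorted[OF assms(1)] a Cons.IH[OF rest] by (auto simp: first_run_def)
  finally show ?case by simp
qed

lemma ncsum_finite_support:
  assumes "finite J" "J \<subseteq> I" "\<And>i. i \<in> I \<Longrightarrow> i \<notin> J \<Longrightarrow> f i w = 0"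
  shows "ncsum f I w = (\<Sum>i\<in>J. f i w)"
proof -
  have "{i\<in>I. f i w \<noteq> 0} \<subseteq> J" using assms by blast
  then have "(\<Sum>i\<in>{i\<in>I. f i w \<noteq> 0}. f i w) = (\<Sum>i\<in>J. f i w)"
    by (intro sum.mono_neutral_left[OF assms(1)]) (use assms in auto)
  then show ?thesis unfolding ncsum_def .
qed

text \<open>The coefficient of w in the left-hand side S is 1 if w has only short runs
  and 0 otherwise: only the run decomposition of w contributes.\<close>

lemma rser_sum_short_parts:
  assumes "0 < m"
  shows "(ncsum rser {L. is_composition L \<and> (\<forall>x\<in>set L. x < m)} w :: 'a::comm_ring_1)
         = (if short_runs m w then 1 else 0)"
proof -
  obtain L0 where L0: "runs L0 w" using runs_exists by blast
  let ?I = "{L. is_composition L \<and> (\<forall>x\<in>set L. x < m)}"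
  have "ncsum rser ?I w = (\<Sum>L\<in>(if short_runs m w then {L0} else {}). (rser L w :: 'a))"
  proof (rule ncsum_finite_support)
    show "(if short_runs m w then {L0} else {}) \<subseteq> ?I"
      using runs_short_runs[OF assms L0] runs_composition[OF L0] by auto
    fix L assume "L \<in> ?I" "L \<notin> (if short_runs m w then {L0} else {})"
    then have "\<not> runs L w"
      using runs_unique[OF L0] runs_short_runs[OF assms L0] by auto
    then show "(rser L w :: 'a) = 0" using \<open>L \<in> ?I\<close> by (simp add: rser_runs)
  qed simp
  also have "\<dots> = (if short_runs m w then 1 else 0)"
    by (simp add: rser_runs[OF runs_composition[OF L0]] L0)
  finally show ?thesis .
qed

section \<open>The alternating sum of complete homogeneous series\<close>

text \<open>The coefficient of a sorted word of length k in the sum of h_{mn} - h_{mn+1}.\<close>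

definition alt_coeff :: "nat \<Rightarrow> nat \<Rightarrow> 'a::comm_ring_1" where
  "alt_coeff m k = (if m dvd k then 1 else 0) - (if 0 < k \<and> m dvd (k - 1) then 1 else 0)"

lemma sum_indicator_progression:
  assumes "0 < (m::nat)"
  shows "(\<Sum>n\<le>N. (if N = m * n + c then 1 else 0) :: 'a::comm_ring_1)
        = (if c \<le> N \<and> m dvd (N - c) then 1 else 0)"
proof (cases "c \<le> N \<and> m dvd (N - c)")
  case True
  then obtain q where q: "N - c = m * q" by blast
  have "q \<le> m * q" using assms by simp
  then have "q \<le> N" using q by linarith
  have "N = m * n + c \<longleftrightarrow> n = q" for n
    using q True assms by auto
  then have "(\<Sum>n\<le>N. (if N = m * n + c then 1 else 0) :: 'a) = (\<Sum>n\<le>N. if n = q then 1 else 0)"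
    by simp
  also have "\<dots> = 1" using \<open>q \<le> N\<close> by simp
  finally show ?thesis using True by simp
next
  case False
  then have "N \<noteq> m * n + c" for n by auto
  then show ?thesis using False by simp
qed

lemma alternating_h_sum:
  assumes "0 < m"
  shows "(ncsum (\<lambda>n w. hser (m * n) w - hser (m * n + 1) w) UNIV w :: 'a::comm_ring_1)
        = (if sorted w then alt_coeff m (length w) else 0)"
proof -
  let ?N = "length w"
  have "ncsum (\<lambda>n w. hser (m * n) w - hser (m * n + 1) w) UNIV w
      = (\<Sum>n\<le>?N. (hser (m * n) w - hser (m * n + 1) w :: 'a))"
  proof (rule ncsum_finite_support)
    fix n assume "n \<notin> {..?N}"
    then have "?N < n" by simp
    moreover have "n \<le> m * n" using assms by simp
    ultimately have "?N \<noteq> m * n" "?N \<noteq> m * n + 1" by linarith+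
    then show "(hser (m * n) w - hser (m * n + 1) w :: 'a) = 0"
      by (simp add: hser_def)
  qed auto
  also have "\<dots> = (if sorted w then (\<Sum>n\<le>?N. (if ?N = m * n + 0 then 1 else 0) :: 'a)
       - (\<Sum>n\<le>?N. (if ?N = m * n + 1 then 1 else 0)) else 0)"
    by (simp add: hser_def sum_subtractf eq_commute)
  also have "\<dots> = (if sorted w then alt_coeff m (length w) else 0)"
    unfolding sum_indicator_progression[OF assms] alt_coeff_def by (auto simp: Suc_le_eq)
  finally show ?thesis .
qed

text \<open>The key numerical identity: the coefficients alt_coeff m k over a window
  of the last (at most) m indices k <= r sum to 0 when r > 0, because
  alt_coeff m k = E (k + 1) - E k telescopes with E k = [k > 0 and m | k - 1].\<close>

lemma alt_coeff_window_sum: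
  assumes "0 < m" "0 < r"
  shows "(\<Sum>k\<le>r. (if r - k < m then alt_coeff m k else 0) :: 'a::comm_ring_1) = 0"
proof -
  define E :: "nat \<Rightarrow> 'a" where "E k = (if 0 < k \<and> m dvd (k - 1) then 1 else 0)" for k
  define a where "a = Suc r - m"
  have telescope: "alt_coeff m k = E (Suc k) - E k" for k
    unfolding alt_coeff_def E_def by simp
  have window: "{k \<in> {..r}. r - k < m} = {a..<Suc r}"
    unfolding a_def by auto
  have "(\<Sum>k\<le>r. (if r - k < m then alt_coeff m k else 0) :: 'a)
      = (\<Sum>k\<in>{k \<in> {..r}. r - k < m}. alt_coeff m k)"
    by (rule sum.inter_filter[symmetric]) simp
  also have "\<dots> = (\<Sum>k = a..<Suc r. E (Suc k) - E k)"
    unfolding window telescope ..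
  also have "\<dots> = E (Suc r) - E a"
    by (rule sum_Suc_diff') (simp add: a_def)
  also have "\<dots> = 0"
  proof (cases "m \<le> r")
    case True
    then have "0 < a" "a - 1 = r - m" unfolding a_def using assms(1) by auto
    moreover have "m dvd (r - m) \<longleftrightarrow> m dvd r" using True by (simp add: dvd_minus_self)
    ultimately show ?thesis unfolding E_def by simp
  next
    case False
    then have "a = 0" unfolding a_def by simp
    moreover have "\<not> m dvd r" using False assms(2) by (auto dest: dvd_imp_le)
    ultimately show ?thesis unfolding E_def by simp
  qed
  finally show ?thesis .
qed

section \<open>The two products\<close>

definition short_run_series :: "nat \<Rightarrow> 'a::comm_ring_1 ncseries" where
  "short_run_series m w = (if short_runs m w then 1 else 0)"

definition alt_h_series :: "nat \<Rightarrow> 'a::comm_ring_1 ncseries" where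
  "alt_h_series m w = (if sorted w then alt_coeff m (length w) else 0)"

lemma nc_mult_Nil: "nc_mult f g [] = f [] * g []"
  by (simp add: nc_mult_def)

definition last_run :: "nat \<Rightarrow> nat list \<Rightarrow> bool" where
  "last_run k w \<longleftrightarrow> k < length w \<and> sorted (drop k w) \<and> (0 < k \<longrightarrow> w ! k < w ! (k - 1))"

lemma last_run_exists: "w \<noteq> [] \<Longrightarrow> \<exists>k. last_run k w"
proof (induction w)
  case (Cons x v)
  show ?case
  proof (cases v)
    case Nil
    then have "last_run 0 (x # v)" by (simp add: last_run_def)
    then show ?thesis by blast
  next
    case (Cons y v')
    with Cons.IH obtain k where k: "last_run k v" by blast
    show ?thesis
    proof (cases "0 < k")
      case True
      then have "last_run (Suc k) (x # v)" using k by (auto simp: last_run_def)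
      then show ?thesis by blast
    next
      case False
      then have "sorted v" using k by (simp add: last_run_def)
      then have "last_run (if x \<le> y then 0 else 1) (x # v)"
        using \<open>v = y # v'\<close> by (auto simp: last_run_def)
      then show ?thesis by blast
    qed
  qed
qed simp

lemma sorted_drop_no_descent:
  assumes "sorted (drop k w)" "k < a" "a < length w"
  shows "w ! (a - 1) \<le> w ! a"
  using sorted_nth_mono[OF assms(1), of "a - 1 - k" "a - k"] assms by simp

lemma last_run_junction:
  assumes "last_run k w" "0 < k"
  shows "hd (drop k w) < last (take k w)"
  using assms by (simp add: last_run_def hd_drop_conv_nth last_take_conv_nth)

lemma short_run_alt_h_term:
  assumes m: "0 < m" and k0: "last_run k0 w" and k: "k0 \<le> k" "k \<le> length w"
  shows "short_run_series m (take k w) * (alt_h_series m (drop k w) :: 'a::comm_ring_1)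
       = short_run_series m (take k0 w) * (if k - k0 < m then alt_coeff m (length w - k) else 0)"
proof -
  define p where "p = take k0 w"
  define u where "u = take (k - k0) (drop k0 w)"
  have split: "take k w = p @ u"
    unfolding p_def u_def using k take_add[of k0 "k - k0" w] by simp
  have "u \<noteq> [] \<Longrightarrow> hd u = hd (drop k0 w)" unfolding u_def by simp
  then have desc: "p \<noteq> [] \<Longrightarrow> u \<noteq> [] \<Longrightarrow> hd u < last p"
    using last_run_junction[OF k0] unfolding p_def by auto
  have "sorted u" "length u = k - k0"
    using k0 k unfolding u_def last_run_def by auto
  then have "short_runs m (take k w) \<longleftrightarrow> short_runs m p \<and> k - k0 < m"
    using short_runs_append_descent[OF desc] short_runs_sorted[OF m] split by simp
  moreover have "sorted (drop k w)"
    using k0 k sorted_wrt_drop[of _ "drop k0 w" "k - k0"] by (auto simp: last_run_def)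
  ultimately show ?thesis
    using k by (simp add: short_run_series_def alt_h_series_def p_def)
qed

text \<open>S * A = 1. At a nonempty word w only the splits inside the last run
  contribute, all with the same S-factor; the remaining sum of coefficients
  of A is a window sum of alt_coeff and vanishes.\<close>

lemma short_run_times_alt_h:
  assumes m: "0 < m"
  shows "nc_mult (short_run_series m) (alt_h_series m) = (nc_one :: 'a::comm_ring_1 ncseries)"
proof
  fix w :: "nat list"
  show "nc_mult (short_run_series m) (alt_h_series m) w = (nc_one w :: 'a)"
  proof (cases "w = []")
    case True
    then show ?thesis using m
      by (simp add: nc_mult_Nil short_run_series_def alt_h_series_def alt_coeff_def
          short_runs_def nc_one_def)
  next
    case False
    define n where "n = length w"
    obtain k0 where k0: "last_run k0 w" using last_run_exists[OF False] by blast
    then have "k0 < n" by (simp add: last_run_def n_def)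
    define c :: 'a where "c = short_run_series m (take k0 w)"
    let ?t = "\<lambda>k. short_run_series m (take k w) * (alt_h_series m (drop k w) :: 'a)"
    have before: "?t k = 0" if "k < k0" for k
    proof -
      have "w ! k0 < w ! (k0 - 1)" "k0 < length w" using k0 that by (auto simp: last_run_def)
      then have "\<not> sorted (drop k w)" using sorted_drop_no_descent[of k w k0] that by fastforce
      then show ?thesis by (simp add: alt_h_series_def)
    qed
    have "nc_mult (short_run_series m) (alt_h_series m) w = (\<Sum>k\<le>n. ?t k)"
      unfolding nc_mult_def n_def ..
    also have "\<dots> = (\<Sum>k\<in>{k0..n}. ?t k)"
      using before by (intro sum.mono_neutral_right) auto
    also have "\<dots> = (\<Sum>k\<in>{k0..n}. c * (if k - k0 < m then alt_coeff m (n - k) else 0))"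
      using short_run_alt_h_term[where 'a='a, OF m k0] unfolding c_def n_def by (intro sum.cong) auto
    also have "\<dots> = c * (\<Sum>i\<le>n - k0. if n - k0 - i < m then alt_coeff m i else 0)"
      unfolding sum_distrib_left
      by (rule sum.reindex_bij_witness[of _ "\<lambda>i. n - i" "\<lambda>k. n - k"]) (use \<open>k0 < n\<close> in auto)
    also have "\<dots> = 0"
      using alt_coeff_window_sum[where 'a='a, OF m, of "n - k0"] \<open>k0 < n\<close>
      by (simp del: diff_diff_left)
    finally show ?thesis using False by (simp add: nc_one_def)
  qed
qed

lemma alt_h_short_run_term:
  assumes m: "0 < m" and a: "first_run a w" and k: "k \<le> a"
  shows "alt_h_series m (take k w) * (short_run_series m (drop k w) :: 'a::comm_ring_1)
       = short_run_series m (drop a w) * (if a - k < m then alt_coeff m k else 0)"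
proof -
  have "a \<le> length w" using a by (simp add: first_run_def)
  define u where "u = drop k (take a w)"
  define q where "q = drop a w"
  have "drop k w = drop k (take a w @ drop a w)" by simp
  also have "\<dots> = u @ q"
    unfolding u_def q_def drop_append using k \<open>a \<le> length w\<close> by simp
  finally have split: "drop k w = u @ q" .
  have "u \<noteq> [] \<Longrightarrow> last u = last (take a w)"
    unfolding u_def using last_drop[of k "take a w"] by (simp add: not_le)
  then have desc: "u \<noteq> [] \<Longrightarrow> q \<noteq> [] \<Longrightarrow> hd q < last u"
    using first_run_junction[OF a] unfolding q_def by auto
  have "sorted u" "length u = a - k"
    using a \<open>a \<le> length w\<close> unfolding u_def first_run_def by auto
  then have "short_runs m (drop k w) \<longleftrightarrow> a - k < m \<and> short_runs m q"
    using short_runs_append_descent[OF desc] short_runs_sorted[OF m] split by simp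
  moreover have "sorted (take k w)"
    using a k sorted_wrt_take[of _ "take a w" k] by (auto simp: first_run_def min_absorb1)
  ultimately show ?thesis
    using k \<open>a \<le> length w\<close> by (auto simp: short_run_series_def alt_h_series_def q_def)
qed

text \<open>A * S = 1, symmetrically: only the splits inside the first run
  contribute.\<close>

lemma alt_h_times_short_run:
  assumes m: "0 < m"
  shows "nc_mult (alt_h_series m) (short_run_series m) = (nc_one :: 'a::comm_ring_1 ncseries)"
proof
  fix w :: "nat list"
  show "nc_mult (alt_h_series m) (short_run_series m) w = (nc_one w :: 'a)"
  proof (cases "w = []")
    case True
    then show ?thesis using m
      by (simp add: nc_mult_Nil short_run_series_def alt_h_series_def alt_coeff_def
          short_runs_def nc_one_def)
  next
    case False
    obtain a where a: "first_run a w" using first_run_exists[OF False] by blast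
    then have "0 < a" "a \<le> length w" by (auto simp: first_run_def)
    define c :: 'a where "c = short_run_series m (drop a w)"
    let ?t = "\<lambda>k. alt_h_series m (take k w) * (short_run_series m (drop k w) :: 'a)"
    have after: "?t k = 0" if "a < k" "k \<le> length w" for k
    proof -
      have "w ! a < w ! (a - 1)" using a that by (auto simp: first_run_def)
      then have "\<not> sorted (take k w)"
        using sorted_take_no_descent[of k w a] \<open>0 < a\<close> that by fastforce
      then show ?thesis by (simp add: alt_h_series_def)
    qed
    have "nc_mult (alt_h_series m) (short_run_series m) w = (\<Sum>k\<le>length w. ?t k)"
      unfolding nc_mult_def ..
    also have "\<dots> = (\<Sum>k\<le>a. ?t k)"
      using after \<open>a \<le> length w\<close> by (intro sum.mono_neutral_right) auto
    also have "\<dots> = c * (\<Sum>k\<le>a. if a - k < m then alt_coeff m k else 0)"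
      unfolding sum_distrib_left c_def using alt_h_short_run_term[where 'a='a, OF m a] by (intro sum.cong) auto
    also have "\<dots> = 0"
      using alt_coeff_window_sum[where 'a='a, OF m \<open>0 < a\<close>] by simp
    finally show ?thesis using False by (simp add: nc_one_def)
  qed
qed

section \<open>The inversion formula\<close>

theorem corollary12:
  fixes m :: nat
  assumes "0 < m"
  defines "S \<equiv> (ncsum (\<lambda>L. rser L) {L. is_composition L \<and> (\<forall>x\<in>set L. x < m)}
                  :: 'a::field_char_0 ncseries)"
      and "A \<equiv> (ncsum (\<lambda>n. (\<lambda>w. hser (m * n) w - hser (m * n + 1) w)) UNIV
                  :: 'a::field_char_0 ncseries)"
  shows "nc_mult S A = nc_one \<and> nc_mult A S = nc_one"
proof -
  have "S = short_run_series m"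
    unfolding S_def short_run_series_def by (rule ext) (rule rser_sum_short_parts[OF assms(1)])
  moreover have "A = alt_h_series m"
    unfolding A_def alt_h_series_def by (rule ext) (rule alternating_h_sum[OF assms(1)])
  ultimately show ?thesis
    using short_run_times_alt_h[OF assms(1)] alt_h_times_short_run[OF assms(1)] by simp
qed

end
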